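(* Let $d \geq 3$ and $1 \leq r < \frac d2$ be integers and let $f_{d,r}(x) = f_{d,r}(x;q) := \sum_{\lambda} x^{\ell(\lambda)} q^{|\lambda|}$, where the sum runs over all partitions $\lambda$ (including the empty partition) such that every part is congruent to $0, \pm r \pmod d$, consecutive parts satisfy $\lambda_i - \lambda_{i+1} \geq d$, and $\lambda_i - \lambda_{i+1} > d$ whenever $d \mid \lambda_i$; here $\ell(\lambda)$ is the number of parts and $|\lambda|$ the sum of the parts. Then, as formal power series in $x$ and $q$, \[ f_{d,r}(x) = \left(1 + xq^r + xq^{d-r}\right) f_{d,r}\left(xq^d\right) + xq^d\left(1 - xq^d\right) f_{d,r}\left(xq^{2d}\right). \] *)

theory Defs
  imports "HOL-Computational_Algebra.Formal_Power_Series"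
begin

text \<open>A partition is a list of positive parts in (weakly) decreasing order; here the
difference conditions force strict decrease. ps ! 0 is the largest part.\<close>
definition dr_partition :: "nat \<Rightarrow> nat \<Rightarrow> nat list \<Rightarrow> bool" where
  "dr_partition d r ps \<longleftrightarrow>
     (\<forall>p\<in>set ps. 0 < p \<and> (p mod d = 0 \<or> p mod d = r \<or> p mod d = d - r)) \<and>
     (\<forall>i. Suc i < length ps \<longrightarrow>
        ps ! Suc i + d \<le> ps ! i \<and> (d dvd ps ! i \<longrightarrow> ps ! Suc i + d < ps ! i))"

definition dr_count :: "nat \<Rightarrow> nat \<Rightarrow> nat \<Rightarrow> nat \<Rightarrow> nat" where
  "dr_count d r n m = card {ps. dr_partition d r ps \<and> length ps = n \<and> sum_list ps = m}"

text \<open>f_{d,r}(x;q) as a power series in x whose coefficients are power series in q.\<close>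
definition f_dr :: "nat \<Rightarrow> nat \<Rightarrow> int fps fps" where
  "f_dr d r = Abs_fps (\<lambda>n. Abs_fps (\<lambda>m. int (dr_count d r n m)))"

text \<open>Substitution x \<mapsto> x q^c.\<close>
definition x_scale :: "nat \<Rightarrow> int fps fps \<Rightarrow> int fps fps" where
  "x_scale c F = Abs_fps (\<lambda>n. fps_X ^ (c * n) * fps_nth F n)"

abbreviation qvar :: "int fps fps" where
  "qvar \<equiv> fps_const fps_X"

end

theory Submission
  imports Defs
begin

text \<open>
  Classify the admissible partitions by their smallest part s, the last entry of the list.
  If all parts exceed d, subtracting d from every part is a bijection onto all admissible
  partitions; this accounts for f(x q^d). Otherwise s is one of r, d - r, d, and removing it
  leaves exactly the partitions whose parts all exceed d (for s = r), all exceed 2d (for s = d),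
  or all exceed d with smallest part other than d + r (for s = d - r). Subtracting d once more
  identifies the excluded partitions, with all parts above d and smallest part d + r, with the
  case s = r. Hence
    f(x) = f(x q^d) + x q^r f(x q^d) + x q^(d-r) (f(x q^d) - x q^(d+r) f(x q^(2d))) + x q^d f(x q^(2d)).
\<close>

unbundle fps_syntax

definition partition_gf :: "nat list set \<Rightarrow> int fps fps" where
  "partition_gf A =
     Abs_fps (\<lambda>n. Abs_fps (\<lambda>m. int (card {ps \<in> A. length ps = n \<and> sum_list ps = m})))"

lemma partition_gf_nth [simp]:
  "partition_gf A $ n $ m = int (card {ps \<in> A. length ps = n \<and> sum_list ps = m})"
  by (simp add: partition_gf_def)

lemma finite_length_sum_list_eq:
  "finite {ps :: nat list. length ps = n \<and> sum_list ps = m}"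
proof (rule finite_subset)
  show "{ps :: nat list. length ps = n \<and> sum_list ps = m} \<subseteq>
        {ps. set ps \<subseteq> {0..m} \<and> length ps = n}"
    by (auto simp: member_le_sum_list)
qed (rule finite_lists_length_eq, simp)

lemma f_dr_eq_partition_gf: "f_dr d r = partition_gf {ps. dr_partition d r ps}"
  by (simp add: f_dr_def dr_count_def partition_gf_def)

lemma partition_gf_Un:
  assumes "A \<inter> B = {}"
  shows "partition_gf (A \<union> B) = partition_gf A + partition_gf B"
proof (intro fps_ext)
  fix n m
  let ?slice = "\<lambda>A :: nat list set. {ps \<in> A. length ps = n \<and> sum_list ps = m}"
  have "?slice (A \<union> B) = ?slice A \<union> ?slice B" by blast
  moreover have "finite (?slice C)" for C
    by (rule finite_subset[OF _ finite_length_sum_list_eq[of n m]]) blast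
  ultimately show "partition_gf (A \<union> B) $ n $ m = (partition_gf A + partition_gf B) $ n $ m"
    using assms by (simp add: card_Un_disjoint disjoint_iff)
qed

lemma partition_gf_Diff:
  assumes "B \<subseteq> A"
  shows "partition_gf (A - B) = partition_gf A - partition_gf B"
proof -
  have "A = (A - B) \<union> B" and "(A - B) \<inter> B = {}"
    using assms by blast+
  then have "partition_gf A = partition_gf (A - B) + partition_gf B"
    by (metis partition_gf_Un)
  then show ?thesis by simp
qed

lemma partition_gf_shift:
  "partition_gf (map (\<lambda>p. p + k) ` A) = x_scale k (partition_gf A)"
proof (intro fps_ext)
  fix n m
  let ?slice = "\<lambda>A m. {ps \<in> A. length ps = n \<and> sum_list ps = m}"
  have sum_shift: "sum_list (map (\<lambda>p. p + k) ps) = sum_list ps + k * length ps"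
    for ps :: "nat list"
    by (induction ps) auto
  have "?slice (map (\<lambda>p. p + k) ` A) m =
        (if m < k * n then {} else map (\<lambda>p. p + k) ` ?slice A (m - k * n))"
    by (auto simp: sum_shift)
  moreover have "inj_on (map (\<lambda>p::nat. p + k)) X" for X
    by (simp add: inj_on_def)
  ultimately show
    "partition_gf (map (\<lambda>p. p + k) ` A) $ n $ m = x_scale k (partition_gf A) $ n $ m"
    by (simp add: x_scale_def fps_X_power_mult_nth card_image)
qed

lemma partition_gf_snoc:
  "partition_gf ((\<lambda>xs. xs @ [s]) ` A) = fps_X * qvar ^ s * partition_gf A"
proof (intro fps_ext)
  fix n m
  let ?slice = "\<lambda>A n m. {ps \<in> A. length ps = n \<and> sum_list ps = m}"
  have "?slice ((\<lambda>xs. xs @ [s]) ` A) n m =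
        (if n = 0 \<or> m < s then {} else (\<lambda>xs. xs @ [s]) ` ?slice A (n - 1) (m - s))"
    by auto
  moreover have "inj_on (\<lambda>xs::nat list. xs @ [s]) X" for X
    by (simp add: inj_on_def)
  ultimately show
    "partition_gf ((\<lambda>xs. xs @ [s]) ` A) $ n $ m = (fps_X * qvar ^ s * partition_gf A) $ n $ m"
    by (simp add: mult.assoc fps_X_power_mult_nth card_image)
qed

definition dr_part :: "nat \<Rightarrow> nat \<Rightarrow> nat \<Rightarrow> bool" where
  "dr_part d r p \<longleftrightarrow> 0 < p \<and> (p mod d = 0 \<or> p mod d = r \<or> p mod d = d - r)"

definition dr_gap :: "nat \<Rightarrow> nat \<Rightarrow> nat \<Rightarrow> bool" where
  "dr_gap d a b \<longleftrightarrow> b + d \<le> a \<and> (d dvd a \<longrightarrow> b + d < a)"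

lemma successively_iff_nth:
  "successively P xs \<longleftrightarrow> (\<forall>i. Suc i < length xs \<longrightarrow> P (xs ! i) (xs ! Suc i))"
  by (induction P xs rule: successively.induct) (auto simp: nth_Cons split: nat.splits)

lemma dr_partition_iff:
  "dr_partition d r ps \<longleftrightarrow> (\<forall>p\<in>set ps. dr_part d r p) \<and> successively (dr_gap d) ps"
  by (auto simp: dr_partition_def dr_part_def dr_gap_def successively_iff_nth)

lemma dr_partition_singleton [simp]: "dr_partition d r [p] \<longleftrightarrow> dr_part d r p"
  by (simp add: dr_partition_iff)

lemma dr_partition_snoc:
  "dr_partition d r (xs @ [s]) \<longleftrightarrow>
     dr_partition d r xs \<and> dr_part d r s \<and> (xs \<noteq> [] \<longrightarrow> dr_gap d (last xs) s)"
  by (auto simp: dr_partition_iff successively_append_iff)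

lemma dr_partition_last_part:
  "dr_partition d r ps \<Longrightarrow> ps \<noteq> [] \<Longrightarrow> dr_part d r (last ps)"
  by (simp add: dr_partition_iff)

lemma dr_partition_last_le:
  "dr_partition d r ps \<Longrightarrow> p \<in> set ps \<Longrightarrow> last ps \<le> p"
proof (induction ps rule: rev_induct)
  case (snoc s xs)
  then show ?case
    by (cases "xs = []") (auto simp: dr_partition_snoc dr_gap_def)
qed simp

lemma dr_partition_all_greater_iff:
  "dr_partition d r ps \<Longrightarrow> (\<forall>p\<in>set ps. c < p) \<longleftrightarrow> (ps \<noteq> [] \<longrightarrow> c < last ps)"
  using dr_partition_last_le by fastforce

lemma dr_part_cases_above:
  assumes "dr_part d r a" and "d * k < a"
  shows "a = d * k + r \<or> a = d * k + (d - r) \<or> d * Suc k \<le> a"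
proof (cases "a < d * Suc k")
  case True
  then have "a div d = k"
    using assms(2) by (intro div_nat_eqI) simp_all
  then have "a mod d = a - d * k"
    by (metis minus_div_mult_eq_mod mult.commute)
  then show ?thesis
    using assms by (auto simp: dr_part_def)
qed simp

lemma dvd_mult_add_less_iff:
  fixes d r :: nat
  assumes "r < d"
  shows "d dvd d * k + r \<longleftrightarrow> r = 0"
  using assms by (auto simp: dvd_add_right_iff dest: nat_dvd_not_less)

lemma dr_part_le_cases:
  assumes "dr_part d r a" and "a \<le> d"
  shows "a = r \<or> a = d - r \<or> a = d"
  using dr_part_cases_above[OF assms(1), of 0] assms by (auto simp: dr_part_def)

lemma dr_gap_same_iff: "dr_gap d a d \<longleftrightarrow> 2 * d < a"
  by (cases "a = 2 * d") (auto simp: dr_gap_def)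

lemma dr_partitions_above:
  assumes "d dvd k"
  shows "{ps. dr_partition d r ps \<and> (\<forall>p\<in>set ps. k < p)} =
         map (\<lambda>p. p + k) ` {ps. dr_partition d r ps}"
proof -
  obtain q where k: "k = d * q"
    using assms by blast
  have part: "dr_part d r (p + k) \<longleftrightarrow> dr_part d r p" if "0 < p" for p
    using that by (simp add: dr_part_def k)
  have gap: "dr_gap d (a + k) (b + k) \<longleftrightarrow> dr_gap d a b" for a b
    using assms by (auto simp: dr_gap_def dvd_add_left_iff)
  have shift: "dr_partition d r (map (\<lambda>p. p + k) xs) \<longleftrightarrow> dr_partition d r xs"
    if "\<forall>p\<in>set xs. 0 < p" for xs
    using that by (auto simp: dr_partition_iff part gap successively_map)
  show ?thesis
  proof (intro set_eqI iffI)
    fix ps assume ps: "ps \<in> {ps. dr_partition d r ps \<and> (\<forall>p\<in>set ps. k < p)}"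
    have "map (\<lambda>p. p + k) (map (\<lambda>p. p - k) ps) = ps"
      unfolding map_map o_def by (rule map_idI) (use ps in auto)
    moreover have "dr_partition d r (map (\<lambda>p. p - k) ps)"
      using ps shift[of "map (\<lambda>p. p - k) ps"] calculation by auto
    ultimately show "ps \<in> map (\<lambda>p. p + k) ` {ps. dr_partition d r ps}"
      by (metis (mono_tags, lifting) image_eqI mem_Collect_eq)
  next
    fix ps assume "ps \<in> map (\<lambda>p. p + k) ` {ps. dr_partition d r ps}"
    then obtain xs where xs: "dr_partition d r xs" "ps = map (\<lambda>p. p + k) xs"
      by blast
    moreover have "\<forall>p\<in>set xs. 0 < p"
      using xs(1) by (simp add: dr_partition_def)
    ultimately show "ps \<in> {ps. dr_partition d r ps \<and> (\<forall>p\<in>set ps. k < p)}"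
      using shift by auto
  qed
qed

lemma partition_gf_dr_above:
  assumes "d dvd k"
  shows "partition_gf {ps. dr_partition d r ps \<and> (\<forall>p\<in>set ps. k < p)} =
         x_scale k (f_dr d r)"
  by (simp add: dr_partitions_above[OF assms] partition_gf_shift f_dr_eq_partition_gf)

lemma dr_partitions_last:
  assumes "dr_part d r s"
  shows "{ps. dr_partition d r ps \<and> ps \<noteq> [] \<and> last ps = s} =
         (\<lambda>xs. xs @ [s]) ` {xs. dr_partition d r xs \<and> (xs \<noteq> [] \<longrightarrow> dr_gap d (last xs) s)}"
proof (intro set_eqI iffI)
  fix ps assume ps: "ps \<in> {ps. dr_partition d r ps \<and> ps \<noteq> [] \<and> last ps = s}"
  then have "ps \<noteq> []" and "last ps = s"
    by simp_all
  then have split: "ps = butlast ps @ [s]"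
    by (metis append_butlast_last_id)
  then have "dr_partition d r (butlast ps)"
    and "butlast ps \<noteq> [] \<longrightarrow> dr_gap d (last (butlast ps)) s"
    using ps dr_partition_snoc[of d r "butlast ps" s] by simp_all
  with split show
    "ps \<in> (\<lambda>xs. xs @ [s]) ` {xs. dr_partition d r xs \<and> (xs \<noteq> [] \<longrightarrow> dr_gap d (last xs) s)}"
    by blast
next
  fix ps
  assume "ps \<in> (\<lambda>xs. xs @ [s]) ` {xs. dr_partition d r xs \<and> (xs \<noteq> [] \<longrightarrow> dr_gap d (last xs) s)}"
  then show "ps \<in> {ps. dr_partition d r ps \<and> ps \<noteq> [] \<and> last ps = s}"
    using assms by (auto simp: dr_partition_snoc)
qed

lemma partition_gf_dr_last_above:
  assumes "dr_part d r s" and "d dvd k"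
    and gap_iff: "\<And>a. dr_part d r a \<Longrightarrow> dr_gap d a s \<longleftrightarrow> k < a"
  shows "partition_gf {ps. dr_partition d r ps \<and> ps \<noteq> [] \<and> last ps = s} =
         fps_X * qvar ^ s * x_scale k (f_dr d r)"
proof -
  have "{xs. dr_partition d r xs \<and> (xs \<noteq> [] \<longrightarrow> dr_gap d (last xs) s)} =
        {xs. dr_partition d r xs \<and> (\<forall>p\<in>set xs. k < p)}"
    using gap_iff dr_partition_last_part dr_partition_all_greater_iff by blast
  then show ?thesis
    by (simp add: dr_partitions_last[OF assms(1)] partition_gf_snoc
        partition_gf_dr_above[OF assms(2)])
qed

lemma dr_partitions_split_last:
  "{ps. dr_partition d r ps} =
     {ps. dr_partition d r ps \<and> (\<forall>p\<in>set ps. d < p)} \<union>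
     {ps. dr_partition d r ps \<and> ps \<noteq> [] \<and> last ps = r} \<union>
     {ps. dr_partition d r ps \<and> ps \<noteq> [] \<and> last ps = d - r} \<union>
     {ps. dr_partition d r ps \<and> ps \<noteq> [] \<and> last ps = d}"
  using dr_partition_all_greater_iff dr_partition_last_part dr_part_le_cases
  by (fastforce simp: not_less)

context
  fixes d r :: nat
  assumes r_pos: "0 < r" and r_less: "2 * r < d"
begin

lemma dr_gap_r_iff:
  assumes "dr_part d r a"
  shows "dr_gap d a r \<longleftrightarrow> d < a"
proof
  assume "d < a"
  then show "dr_gap d a r"
    using dr_part_cases_above[OF assms, of 1]
      dvd_mult_add_less_iff[of r d 1] dvd_mult_add_less_iff[of "d - r" d 1]
      r_pos r_less by (auto simp: dr_gap_def)
qed (use r_pos in \<open>simp add: dr_gap_def\<close>)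

lemma dr_gap_d_minus_r_iff:
  assumes "dr_part d r a"
  shows "dr_gap d a (d - r) \<longleftrightarrow> d < a \<and> a \<noteq> d + r"
proof
  assume "d < a \<and> a \<noteq> d + r"
  then show "dr_gap d a (d - r)"
    using dr_part_cases_above[OF assms, of 1] dvd_mult_add_less_iff[of "d - r" d 1]
      r_pos r_less by (auto simp: dr_gap_def)
qed (use r_pos r_less in \<open>auto simp add: dr_gap_def\<close>)

lemma dr_gap_d_plus_r_iff:
  assumes "dr_part d r a"
  shows "dr_gap d a (d + r) \<longleftrightarrow> 2 * d < a"
proof
  assume "2 * d < a"
  then show "dr_gap d a (d + r)"
    using dr_part_cases_above[OF assms, of 2]
      dvd_mult_add_less_iff[of r d 2] dvd_mult_add_less_iff[of "d - r" d 2]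
      r_pos r_less by (auto simp: dr_gap_def)
qed (use r_pos in \<open>simp add: dr_gap_def\<close>)

lemma partition_gf_dr_last_r:
  "partition_gf {ps. dr_partition d r ps \<and> ps \<noteq> [] \<and> last ps = r} =
     fps_X * qvar ^ r * x_scale d (f_dr d r)"
  by (rule partition_gf_dr_last_above)
    (use r_pos r_less in \<open>simp_all add: dr_part_def dr_gap_r_iff\<close>)

lemma partition_gf_dr_last_d:
  "partition_gf {ps. dr_partition d r ps \<and> ps \<noteq> [] \<and> last ps = d} =
     fps_X * qvar ^ d * x_scale (2 * d) (f_dr d r)"
  by (rule partition_gf_dr_last_above)
    (use r_less in \<open>simp_all add: dr_part_def dr_gap_same_iff\<close>)

lemma partition_gf_dr_last_d_minus_r:
  "partition_gf {ps. dr_partition d r ps \<and> ps \<noteq> [] \<and> last ps = d - r} =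
     fps_X * qvar ^ (d - r) *
       (x_scale d (f_dr d r) - fps_X * qvar ^ (d + r) * x_scale (2 * d) (f_dr d r))"
proof -
  let ?above = "{xs. dr_partition d r xs \<and> (\<forall>p\<in>set xs. d < p)}"
  let ?last_d_plus_r = "{xs. dr_partition d r xs \<and> xs \<noteq> [] \<and> last xs = d + r}"
  have parts: "dr_part d r (d - r)" "dr_part d r (d + r)"
    using r_pos r_less by (auto simp: dr_part_def)
  have "(xs \<noteq> [] \<longrightarrow> dr_gap d (last xs) (d - r)) \<longleftrightarrow>
        (\<forall>p\<in>set xs. d < p) \<and> \<not> (xs \<noteq> [] \<and> last xs = d + r)"
    if "dr_partition d r xs" for xs
    using dr_gap_d_minus_r_iff[OF dr_partition_last_part[OF that]]
      dr_partition_all_greater_iff[OF that] by auto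
  then have "{xs. dr_partition d r xs \<and> (xs \<noteq> [] \<longrightarrow> dr_gap d (last xs) (d - r))} =
        ?above - ?last_d_plus_r"
    by blast
  moreover have "?last_d_plus_r \<subseteq> ?above"
  proof (intro subsetI CollectI conjI ballI)
    fix xs p assume xs: "xs \<in> ?last_d_plus_r" and "p \<in> set xs"
    then have "last xs \<le> p"
      using dr_partition_last_le by blast
    with xs r_pos show "d < p"
      by simp
  qed simp
  moreover have "partition_gf ?last_d_plus_r = fps_X * qvar ^ (d + r) * x_scale (2 * d) (f_dr d r)"
    by (rule partition_gf_dr_last_above[OF parts(2)]) (simp_all add: dr_gap_d_plus_r_iff)
  ultimately show ?thesis
    by (simp add: dr_partitions_last[OF parts(1)] partition_gf_snoc partition_gf_Diff
        partition_gf_dr_above)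
qed

lemma partition_gf_dr_partitions_split:
  "partition_gf {ps. dr_partition d r ps} =
     partition_gf {ps. dr_partition d r ps \<and> (\<forall>p\<in>set ps. d < p)} +
     partition_gf {ps. dr_partition d r ps \<and> ps \<noteq> [] \<and> last ps = r} +
     partition_gf {ps. dr_partition d r ps \<and> ps \<noteq> [] \<and> last ps = d - r} +
     partition_gf {ps. dr_partition d r ps \<and> ps \<noteq> [] \<and> last ps = d}"
proof -
  let ?above = "{ps. dr_partition d r ps \<and> (\<forall>p\<in>set ps. d < p)}"
  let ?last = "\<lambda>s. {ps. dr_partition d r ps \<and> ps \<noteq> [] \<and> last ps = s}"
  have above_last: "?above \<inter> ?last s = {}" if "s \<le> d" for s
    using that by (fastforce dest: last_in_set)
  have last_last: "?last s \<inter> ?last t = {}" if "s \<noteq> t" for s t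
    using that by blast
  have "r \<noteq> d - r" "r < d" "d - r < d"
    using r_pos r_less by auto
  then show ?thesis
    by (subst dr_partitions_split_last)
      (simp add: partition_gf_Un Int_Un_distrib2 above_last last_last)
qed

end

theorem proposition2p1:
  fixes d r :: nat
  assumes "d \<ge> 3" and "1 \<le> r" and "2 * r < d"
  shows "f_dr d r =
    (1 + fps_X * qvar ^ r + fps_X * qvar ^ (d - r)) * x_scale d (f_dr d r)
    + fps_X * qvar ^ d * (1 - fps_X * qvar ^ d) * x_scale (2 * d) (f_dr d r)"
proof -
  have r: "0 < r" "2 * r < d"
    using assms by auto
  define A where "A = x_scale d (f_dr d r)"
  define B where "B = x_scale (2 * d) (f_dr d r)"
  have "f_dr d r = A + fps_X * qvar ^ r * A +
      fps_X * qvar ^ (d - r) * (A - fps_X * qvar ^ (d + r) * B) + fps_X * qvar ^ d * B"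
    unfolding A_def B_def
    by (subst f_dr_eq_partition_gf)
      (simp only: partition_gf_dr_partitions_split[OF r] partition_gf_dr_above[OF dvd_refl]
        partition_gf_dr_last_r[OF r] partition_gf_dr_last_d_minus_r[OF r]
        partition_gf_dr_last_d[OF r])
  moreover have "qvar ^ (d - r) * qvar ^ (d + r) = qvar ^ d * qvar ^ d"
    using r by (simp only: power_add[symmetric]) simp
  ultimately show ?thesis
    unfolding A_def[symmetric] B_def[symmetric] by (simp add: algebra_simps del: fps_const_power)
qed

end
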